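(* The Cantor–Bendixson rank of the poset $\mathcal{Q}$ is $\omega$, the first infinite ordinal.
   Context: $\mathcal{Q}$ is the set $\mathbb{N}\times(\mathbb{N}\cup\{0\})$ (with $\mathbb{N}=\{1,2,\dots\}$) with the relation $(t',r')<(t,r)$ iff $t'\mid t$ and $t'r'<tr$. For a set $\mathcal{P}$ with a transitive relation $<$, an element $p$ is minimal if no $q\in\mathcal{P}$ has $q<p$. Let $\mathcal{P}_0$ be the set of minimal elements of $\mathcal{P}$ and $\bar{\mathcal{P}}_0=\mathcal{P}\setminus\mathcal{P}_0$; for an ordinal $\alpha$, $\mathcal{P}_{\alpha+1}$ is the union of $\mathcal{P}_\alpha$ and the set of minimal elements of $\bar{\mathcal{P}}_\alpha$ (with the induced relation), and $\bar{\mathcal{P}}_{\alpha+1}=\mathcal{P}\setminus\mathcal{P}_{\alpha+1}$; for a limit ordinal $\beta$, $\mathcal{P}_\beta=\bigcup_{\alpha<\beta}\mathcal{P}_\alpha$ and $\bar{\mathcal{P}}_\beta=\bigcap_{\alpha<\beta}\bar{\mathcal{P}}_\alpha$. The Cantor–Bendixson rank $r_{CB}(\mathcal{P})$ is the minimal ordinal $\alpha$ with $\bar{\mathcal{P}}_\alpha=\bar{\mathcal{P}}_{\alpha+1}$. *)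

theory Defs
  imports Main
begin

definition minimal_elems :: "('a \<Rightarrow> 'a \<Rightarrow> bool) \<Rightarrow> 'a set \<Rightarrow> 'a set" where
  "minimal_elems R S = {p \<in> S. \<not> (\<exists>q\<in>S. R q p)}"

text \<open>Finite stages of the Cantor--Bendixson derivation: cb_bar R P n is the complement
  P minus P_n. Since P_(n+1) = P_n union min(P minus P_n), the complement of the next stage
  is the previous complement with its minimal elements removed.\<close>
fun cb_bar :: "('a \<Rightarrow> 'a \<Rightarrow> bool) \<Rightarrow> 'a set \<Rightarrow> nat \<Rightarrow> 'a set" where
  "cb_bar R P 0 = P - minimal_elems R P"
| "cb_bar R P (Suc n) = cb_bar R P n - minimal_elems R (cb_bar R P n)"

definition cb_bar_omega :: "('a \<Rightarrow> 'a \<Rightarrow> bool) \<Rightarrow> 'a set \<Rightarrow> 'a set" where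
  "cb_bar_omega R P = (\<Inter>n. cb_bar R P n)"

definition cb_bar_omega_succ :: "('a \<Rightarrow> 'a \<Rightarrow> bool) \<Rightarrow> 'a set \<Rightarrow> 'a set" where
  "cb_bar_omega_succ R P = cb_bar_omega R P - minimal_elems R (cb_bar_omega R P)"

text \<open>The Cantor--Bendixson rank equals omega: omega is the least ordinal alpha with
  Pbar_alpha = Pbar_(alpha+1), i.e. no finite n has Pbar_n = Pbar_(n+1), but
  Pbar_omega = Pbar_(omega+1).\<close>
definition cb_rank_is_omega :: "('a \<Rightarrow> 'a \<Rightarrow> bool) \<Rightarrow> 'a set \<Rightarrow> bool" where
  "cb_rank_is_omega R P \<longleftrightarrow>
     (\<forall>n. cb_bar R P n \<noteq> cb_bar R P (Suc n)) \<and>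
     cb_bar_omega R P = cb_bar_omega_succ R P"

text \<open>The poset Q = N x (N union {0}) with (t',r') < (t,r) iff t' dvd t and t' r' < t r.\<close>
definition Q_set :: "(nat \<times> nat) set" where
  "Q_set = {(t, r). t \<ge> 1}"

definition Q_less :: "nat \<times> nat \<Rightarrow> nat \<times> nat \<Rightarrow> bool" where
  "Q_less p q \<longleftrightarrow> fst p dvd fst q \<and> fst p * snd p < fst q * snd q"

end

theory Submission
  imports Defs
begin

text \<open>The product \<open>t r\<close> is a height on \<open>\<Q>\<close>: it increases strictly along \<open><\<close>, and
  \<open>(1, m) < (t, r)\<close> whenever \<open>m < t r\<close>, so every smaller height is realised below
  each point. For such a height the derivation strips exactly one level per step, hence
  the \<open>n\<close>-th stage is the set of points of height above \<open>n\<close>: every stage is a proper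
  shrinking, and their intersection is empty.\<close>

lemma Diff_minimal_elems_iff:
  "p \<in> S - minimal_elems R S \<longleftrightarrow> p \<in> S \<and> (\<exists>q\<in>S. R q p)"
  by (auto simp: minimal_elems_def)

lemma cb_bar_eq_height_gt:
  fixes h :: "'a \<Rightarrow> nat"
  assumes height_less: "\<And>p q. p \<in> P \<Longrightarrow> q \<in> P \<Longrightarrow> R q p \<Longrightarrow> h q < h p"
    and height_below: "\<And>p m. p \<in> P \<Longrightarrow> m < h p \<Longrightarrow> \<exists>q\<in>P. R q p \<and> h q = m"
  shows "cb_bar R P n = {p \<in> P. n < h p}"
proof (induction n)
  case 0
  have "P - minimal_elems R P = {p \<in> P. 0 < h p}"
  proof (rule set_eqI)
    fix p
    show "p \<in> P - minimal_elems R P \<longleftrightarrow> p \<in> {p \<in> P. 0 < h p}"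
      using height_less[of p] height_below[of p 0]
      unfolding Diff_minimal_elems_iff by fastforce
  qed
  then show ?case by simp
next
  case (Suc n)
  have "{p \<in> P. n < h p} - minimal_elems R {p \<in> P. n < h p} = {p \<in> P. Suc n < h p}"
  proof (rule set_eqI)
    fix p
    show "p \<in> {p \<in> P. n < h p} - minimal_elems R {p \<in> P. n < h p}
          \<longleftrightarrow> p \<in> {p \<in> P. Suc n < h p}"
      using height_less[of p] height_below[of p "Suc n"]
      unfolding Diff_minimal_elems_iff by fastforce
  qed
  with Suc show ?case by simp
qed

lemma cb_rank_is_omega_if_height:
  fixes h :: "'a \<Rightarrow> nat"
  assumes height_less: "\<And>p q. p \<in> P \<Longrightarrow> q \<in> P \<Longrightarrow> R q p \<Longrightarrow> h q < h p"
    and height_below: "\<And>p m. p \<in> P \<Longrightarrow> m < h p \<Longrightarrow> \<exists>q\<in>P. R q p \<and> h q = m"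
    and height_surj: "\<And>n. \<exists>p\<in>P. h p = n"
  shows "cb_rank_is_omega R P"
proof -
  note stages = cb_bar_eq_height_gt[of P R h, OF height_less height_below]
  have "cb_bar R P n \<noteq> cb_bar R P (Suc n)" for n
  proof -
    obtain p where "p \<in> P" "h p = Suc n"
      using height_surj by blast
    then have "p \<in> cb_bar R P n" "p \<notin> cb_bar R P (Suc n)"
      by (simp_all del: cb_bar.simps add: stages)
    then show ?thesis by blast
  qed
  moreover have "cb_bar_omega R P = {}"
    unfolding cb_bar_omega_def
    using stages[of "h _"] by blast
  ultimately show ?thesis
    by (simp add: cb_rank_is_omega_def cb_bar_omega_succ_def)
qed

lemma Q_less_imp_prod_less: "Q_less q p \<Longrightarrow> fst q * snd q < fst p * snd p"
  by (simp add: Q_less_def)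

lemma one_Q_less: "m < fst p * snd p \<Longrightarrow> Q_less (1, m) p"
  by (simp add: Q_less_def)

theorem theorem6p5:
  shows "cb_rank_is_omega Q_less Q_set"
proof (rule cb_rank_is_omega_if_height[where h = "\<lambda>p. fst p * snd p"])
  show "\<And>p q. Q_less q p \<Longrightarrow> fst q * snd q < fst p * snd p"
    by (rule Q_less_imp_prod_less)
  show "\<exists>q\<in>Q_set. Q_less q p \<and> fst q * snd q = m" if "m < fst p * snd p" for p m
    using one_Q_less[OF that] by (intro bexI[of _ "(1, m)"]) (auto simp: Q_set_def)
  show "\<exists>p\<in>Q_set. fst p * snd p = n" for n
    by (intro bexI[of _ "(1, n)"]) (auto simp: Q_set_def)
qed

end
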